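(* $\mathrm{FO}(\perp\!\!\!\perp)\not\le\mathrm{ESO}_{\mathbb R}[\le,+,0,1]$; that is, there is a formula $\phi\in\mathrm{FO}(\perp\!\!\!\perp)$ (for instance $\phi(x)=\exists c\,\exists y\,\forall z\,(\mathrm{dep}(c)\wedge x\perp\!\!\!\perp y\wedge x\approx y\wedge((x=c\wedge y=c)\leftrightarrow z=c))$, where $\mathrm{dep}(c)$ and $x\approx y$ are expressible in $\mathrm{FO}(\perp\!\!\!\perp)$) such that no formula $\psi$ of $\mathrm{ESO}_{\mathbb R}[\le,+,0,1]$ satisfies $\mathrm{Struc}_{d[0,1]}(\phi)=\mathrm{Struc}_{d[0,1]}(\psi)$.
   Context: Conventions on structures and $\mathrm{ESO}_{\mathbb R}$. Let $\tau$ be a finite relational vocabulary and $\sigma$ a finite functional vocabulary. An $\mathbb R$-structure of vocabulary $\tau\cup\sigma$ is a tuple $\mathfrak A=(A,\mathbb R,(R^{\mathfrak A})_{R\in\tau},(g^{\mathfrak A})_{g\in\sigma})$ where $A$ is a finite set with at least two elements, each $R^{\mathfrak A}\subseteq A^{\mathrm{ar}(R)}$ and each $g^{\mathfrak A}\colon A^{\mathrm{ar}(g)}\to\mathbb R$. $\mathfrak A$ is a $d[0,1]$-structure if every $g^{\mathfrak A}$ is a probability distribution on $A^{\mathrm{ar}(g)}$. Numerical terms are built by $i::=c\mid f(\vec x)\mid i+i\mid i\times i\mid \mathrm{SUM}_{\vec y}\,i$, where $c\in\mathbb R$ is a constant, $f$ is a function symbol or function variable, and $\vec x,\vec y$ are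 tuples of first-order variables, with the usual real interpretation. For $O\subseteq\{+,\times,\mathrm{SUM}\}$, $E\subseteq\{=,<,\le\}$, $C\subseteq\mathbb R$, the formulae of $\mathrm{ESO}_{\mathbb R}[O,E,C]$ are given by $\phi::= x=y\mid\neg x=y\mid i\,e\,j\mid\neg\, i\,e\,j\mid R(\vec x)\mid\neg R(\vec x)\mid\phi\wedge\phi\mid\phi\vee\phi\mid\exists x\phi\mid\forall x\phi\mid\exists f\phi$, where $i,j$ are numerical terms using only operations in $O$ and constants in $C$, $e\in E$, $R\in\tau$, and $f$ is a function variable; first-order variables range over $A$ and $\exists f$ ranges over all functions $A^{\mathrm{ar}(f)}\to\mathbb R$. $\mathrm{ESO}_{\mathbb R}[\le,+,0,1]$ means $O=\{+\}$, $E=\{\le\}$, $C=\{0,1\}$. Teams and probabilistic team semantics. A probabilistic team is a function $\mathbb X\colon X\to[0,1]$ with $\sum_{s\in X}\mathbb X(s)=1$, $X$ a finite set of assignments from a finite variable set into a finite set $A$. Write $\mathrm{supp}(\mathbb X)=\{s:\mathbb X(s)>0\}$, $|\mathbb X|=\sum_s\mathbb X(s)$, $\mathbb X_\alpha$ for the restriction to assignments satisfying first-order $\alpha$. The marginal of $\mathbb X$ on $V$ is $s\mapsto\sum_{t\upharpoonright V=s}\mathbb X(t)$; $\mathbb X[A/x]$ is the team on assignments $s$ over $\mathrm{Dom}(\mathbb X)\cup\{x\}$ with $s(x)\in A$, given by $s\mapsto\mathbb X'(s\upharpoonright(\mathrm{Dom}(\mathbb X)\setminus\{x\}))/|A|$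 with $\mathbb X'$ the marginal on $\mathrm{Dom}(\mathbb X)\setminus\{x\}$. Formulae are in negation normal form; $\alpha\leftrightarrow\beta$ for first-order $\alpha,\beta$ abbreviates $(\alpha\wedge\beta)\vee(\alpha^\bot\wedge\beta^\bot)$ with $\alpha^\bot$ the negation normal form of $\neg\alpha$. Clauses: literals hold iff they hold for every $s\in\mathrm{supp}(\mathbb X)$; $\wedge$ componentwise; $\psi\vee\theta$ iff $\mathbb X=\alpha\mathbb Y+(1-\alpha)\mathbb Z$ for probabilistic teams $\mathbb Y\models\psi$, $\mathbb Z\models\theta$, $\alpha\in[0,1]$; $\forall x\psi$ iff $\mathbb X[A/x]\models\psi$; $\exists x\psi$ iff some probabilistic team over $\mathrm{Dom}(\mathbb X)\cup\{x\}$ with the same marginal on $\mathrm{Dom}(\mathbb X)\setminus\{x\}$ as $\mathbb X$ satisfies $\psi$. Atoms: $\vec x\approx\vec y$ iff $|\mathbb X_{\vec x=\vec a}|=|\mathbb X_{\vec y=\vec a}|$ for all $\vec a$; $\mathrm{dep}(c)$ iff $c$ is constant on $\mathrm{supp}(\mathbb X)$; $\vec y\perp\!\!\!\perp\vec z$ iff $|\mathbb X_{\vec y=\vec b}|\cdot|\mathbb X_{\vec z=\vec c}|=|\mathbb X_{\vec y\vec z=\vec b\vec c}|\cdot|\mathbb X|$ for all $\vec b,\vec c$. $\mathrm{FO}(\perp\!\!\!\perp)$ is first-order logic extended with marginal independence atoms. Comparing team logics with ESO. For a probabilistic team $\mathbb X$ with variable domain $\{x_1,\dots,x_n\}$ and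 values in $A$, $f_{\mathbb X}\colon A^n\to[0,1]$ is given by $f_{\mathbb X}(s(x_1),\dots,s(x_n))=\mathbb X(s)$ for $s$ in the team and $0$ elsewhere. For $\phi\in\mathrm{FO}(\mathcal C)$ of vocabulary $\tau$ with free variables $x_1,\dots,x_n$, $\mathrm{Struc}_{d[0,1]}(\phi)$ is the class of $d[0,1]$-structures $\mathfrak A$ of vocabulary $\tau\cup\{f\}$ ($f$ $n$-ary) such that the $\tau$-reduct of $\mathfrak A$ satisfies $\phi$ under the probabilistic team $\mathbb X$ with $f_{\mathbb X}=f^{\mathfrak A}$. For an ESO-type formula with one free $n$-ary function variable $f$ and no free first-order variables, $\mathrm{Struc}_{d[0,1]}$ is the class of $d[0,1]$-structures of vocabulary $\tau\cup\{f\}$ satisfying it. For logics $\mathcal L,\mathcal L'$, $\mathcal L\le\mathcal L'$ means every $\phi\in\mathcal L$ has some $\phi'\in\mathcal L'$ with $\mathrm{Struc}_{d[0,1]}(\phi)=\mathrm{Struc}_{d[0,1]}(\phi')$. *)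

theory Defs
  imports Complex_Main
begin

text \<open>Relation symbols and function (variable) symbols are pairs (name, arity).
Universes are finite subsets of nat (classes are isomorphism closed).\<close>

type_synonym sym = "nat \<times> nat"

record rstruc =
  univ :: "nat set"
  rel  :: "sym \<Rightarrow> nat list set"
  fval :: "nat list \<Rightarrow> real"

definition tuples :: "nat \<Rightarrow> nat set \<Rightarrow> nat list set" where
  "tuples k A = {l. length l = k \<and> set l \<subseteq> A}"

text \<open>d[0,1]-structure of vocabulary tau plus one n-ary function symbol f.\<close>
definition is_dstruc :: "sym set \<Rightarrow> nat \<Rightarrow> rstruc \<Rightarrow> bool" where
  "is_dstruc tau n M \<longleftrightarrow>
     finite (univ M) \<and> card (univ M) \<ge> 2 \<and>
     (\<forall>R\<in>tau. rel M R \<subseteq> tuples (snd R) (univ M)) \<and>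
     (\<forall>R. R \<notin> tau \<longrightarrow> rel M R = {}) \<and>
     (\<forall>l. l \<notin> tuples n (univ M) \<longrightarrow> fval M l = 0) \<and>
     (\<forall>l. fval M l \<ge> 0) \<and>
     (\<Sum>l\<in>tuples n (univ M). fval M l) = 1"

datatype fo =
    FEq nat nat | FNeq nat nat
  | FRel sym "nat list" | FNRel sym "nat list"
  | FAnd fo fo | FOr fo fo
  | FEx nat fo | FAll nat fo
  | FInd "nat list" "nat list"

primrec fo_fv :: "fo \<Rightarrow> nat set" where
  "fo_fv (FEq x y) = {x, y}"
| "fo_fv (FNeq x y) = {x, y}"
| "fo_fv (FRel R xs) = set xs"
| "fo_fv (FNRel R xs) = set xs"
| "fo_fv (FAnd p q) = fo_fv p \<union> fo_fv q"
| "fo_fv (FOr p q) = fo_fv p \<union> fo_fv q"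
| "fo_fv (FEx x p) = fo_fv p - {x}"
| "fo_fv (FAll x p) = fo_fv p - {x}"
| "fo_fv (FInd ys zs) = set ys \<union> set zs"

primrec fo_wf :: "sym set \<Rightarrow> fo \<Rightarrow> bool" where
  "fo_wf tau (FEq x y) = True"
| "fo_wf tau (FNeq x y) = True"
| "fo_wf tau (FRel R xs) = (R \<in> tau \<and> length xs = snd R)"
| "fo_wf tau (FNRel R xs) = (R \<in> tau \<and> length xs = snd R)"
| "fo_wf tau (FAnd p q) = (fo_wf tau p \<and> fo_wf tau q)"
| "fo_wf tau (FOr p q) = (fo_wf tau p \<and> fo_wf tau q)"
| "fo_wf tau (FEx x p) = fo_wf tau p"
| "fo_wf tau (FAll x p) = fo_wf tau p"
| "fo_wf tau (FInd ys zs) = True"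

type_synonym asg = "nat \<rightharpoonup> nat"
type_synonym pteam = "asg \<Rightarrow> real"

definition asgs :: "nat set \<Rightarrow> nat set \<Rightarrow> asg set" where
  "asgs A V = {s. dom s = V \<and> ran s \<subseteq> A}"

definition is_pteam :: "nat set \<Rightarrow> nat set \<Rightarrow> pteam \<Rightarrow> bool" where
  "is_pteam A V X \<longleftrightarrow> (\<forall>s. X s \<ge> 0) \<and> (\<forall>s. s \<notin> asgs A V \<longrightarrow> X s = 0)
     \<and> (\<Sum>s\<in>asgs A V. X s) = 1"

definition marg :: "nat set \<Rightarrow> nat set \<Rightarrow> nat set \<Rightarrow> pteam \<Rightarrow> pteam" where
  "marg A W U X = (\<lambda>s. if s \<in> asgs A U
      then (\<Sum>t\<in>{t\<in>asgs A W. t |` U = s}. X t) else 0)"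

definition sup_team :: "nat set \<Rightarrow> nat set \<Rightarrow> nat \<Rightarrow> pteam \<Rightarrow> pteam" where
  "sup_team A V x X = (\<lambda>s. if s \<in> asgs A (insert x V)
      then marg A V (V - {x}) X (s |` (V - {x})) / real (card A) else 0)"

definition weight :: "nat set \<Rightarrow> nat set \<Rightarrow> pteam \<Rightarrow> nat list \<Rightarrow> nat list \<Rightarrow> real" where
  "weight A V X ys b = (\<Sum>s\<in>{s\<in>asgs A V. map s ys = map Some b}. X s)"

primrec fo_sat :: "rstruc \<Rightarrow> fo \<Rightarrow> nat set \<Rightarrow> pteam \<Rightarrow> bool" where
  "fo_sat M (FEq x y) V X = (\<forall>s\<in>asgs (univ M) V. X s > 0 \<longrightarrow> s x = s y)"
| "fo_sat M (FNeq x y) V X = (\<forall>s\<in>asgs (univ M) V. X s > 0 \<longrightarrow> s x \<noteq> s y)"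
| "fo_sat M (FRel R xs) V X =
     (\<forall>s\<in>asgs (univ M) V. X s > 0 \<longrightarrow> map (the \<circ> s) xs \<in> rel M R)"
| "fo_sat M (FNRel R xs) V X =
     (\<forall>s\<in>asgs (univ M) V. X s > 0 \<longrightarrow> map (the \<circ> s) xs \<notin> rel M R)"
| "fo_sat M (FAnd p q) V X = (fo_sat M p V X \<and> fo_sat M q V X)"
| "fo_sat M (FOr p q) V X =
     (\<exists>Y Z \<alpha>. is_pteam (univ M) V Y \<and> is_pteam (univ M) V Z \<and> 0 \<le> \<alpha> \<and> \<alpha> \<le> 1 \<and>
        (\<forall>s. X s = \<alpha> * Y s + (1 - \<alpha>) * Z s) \<and> fo_sat M p V Y \<and> fo_sat M q V Z)"
| "fo_sat M (FEx x p) V X =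
     (\<exists>Y. is_pteam (univ M) (insert x V) Y \<and>
        marg (univ M) (insert x V) (V - {x}) Y = marg (univ M) V (V - {x}) X \<and>
        fo_sat M p (insert x V) Y)"
| "fo_sat M (FAll x p) V X = fo_sat M p (insert x V) (sup_team (univ M) V x X)"
| "fo_sat M (FInd ys zs) V X =
     (\<forall>b c. length b = length ys \<longrightarrow> length c = length zs \<longrightarrow>
        weight (univ M) V X ys b * weight (univ M) V X zs c =
        weight (univ M) V X (ys @ zs) (b @ c) * (\<Sum>s\<in>asgs (univ M) V. X s))"

text \<open>The probabilistic team X with f_X = f^M, over the variables xs (in this order).\<close>
definition team_of :: "rstruc \<Rightarrow> nat list \<Rightarrow> pteam" where
  "team_of M xs = (\<lambda>s. if s \<in> asgs (univ M) (set xs) then fval M (map (the \<circ> s) xs) else 0)"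

definition Struc_FO :: "sym set \<Rightarrow> nat list \<Rightarrow> fo \<Rightarrow> rstruc set" where
  "Struc_FO tau xs phi = {M. is_dstruc tau (length xs) M \<and>
      fo_sat M phi (set xs) (team_of M xs)}"

datatype numop = OPlus | OTimes | OSum
datatype cmpop = CEq | CLt | CLe

datatype nterm =
    NConst real
  | NApp sym "nat list"          \<comment> \<open>function symbol / function variable applied\<close>
  | NAdd nterm nterm
  | NMul nterm nterm
  | NSum "nat list" nterm

datatype eso =
    EEq nat nat | ENeq nat nat
  | ECmp cmpop nterm nterm | ENCmp cmpop nterm nterm
  | ERel sym "nat list" | ENRel sym "nat list"
  | EAnd eso eso | EOr eso eso
  | EEx nat eso | EAll nat eso
  | EExF sym eso

primrec nt_ops :: "nterm \<Rightarrow> numop set" where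
  "nt_ops (NConst c) = {}"
| "nt_ops (NApp g xs) = {}"
| "nt_ops (NAdd i j) = insert OPlus (nt_ops i \<union> nt_ops j)"
| "nt_ops (NMul i j) = insert OTimes (nt_ops i \<union> nt_ops j)"
| "nt_ops (NSum ys i) = insert OSum (nt_ops i)"

primrec nt_consts :: "nterm \<Rightarrow> real set" where
  "nt_consts (NConst c) = {c}"
| "nt_consts (NApp g xs) = {}"
| "nt_consts (NAdd i j) = nt_consts i \<union> nt_consts j"
| "nt_consts (NMul i j) = nt_consts i \<union> nt_consts j"
| "nt_consts (NSum ys i) = nt_consts i"

primrec nt_fv :: "nterm \<Rightarrow> nat set" where
  "nt_fv (NConst c) = {}"
| "nt_fv (NApp g xs) = set xs"
| "nt_fv (NAdd i j) = nt_fv i \<union> nt_fv j"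
| "nt_fv (NMul i j) = nt_fv i \<union> nt_fv j"
| "nt_fv (NSum ys i) = nt_fv i - set ys"

primrec nt_ffv :: "nterm \<Rightarrow> sym set" where
  "nt_ffv (NConst c) = {}"
| "nt_ffv (NApp g xs) = {g}"
| "nt_ffv (NAdd i j) = nt_ffv i \<union> nt_ffv j"
| "nt_ffv (NMul i j) = nt_ffv i \<union> nt_ffv j"
| "nt_ffv (NSum ys i) = nt_ffv i"

primrec nt_wf :: "nterm \<Rightarrow> bool" where
  "nt_wf (NConst c) = True"
| "nt_wf (NApp g xs) = (length xs = snd g)"
| "nt_wf (NAdd i j) = (nt_wf i \<and> nt_wf j)"
| "nt_wf (NMul i j) = (nt_wf i \<and> nt_wf j)"
| "nt_wf (NSum ys i) = (distinct ys \<and> nt_wf i)"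

text \<open>Fragment ESO_R[O,E,C]: operations in O, comparisons in E, constants in C.\<close>
primrec in_frag :: "numop set \<Rightarrow> cmpop set \<Rightarrow> real set \<Rightarrow> eso \<Rightarrow> bool" where
  "in_frag Ops E C (EEq x y) = True"
| "in_frag Ops E C (ENeq x y) = True"
| "in_frag Ops E C (ECmp e i j) = (e \<in> E \<and> nt_ops i \<union> nt_ops j \<subseteq> Ops \<and> nt_consts i \<union> nt_consts j \<subseteq> C)"
| "in_frag Ops E C (ENCmp e i j) = (e \<in> E \<and> nt_ops i \<union> nt_ops j \<subseteq> Ops \<and> nt_consts i \<union> nt_consts j \<subseteq> C)"
| "in_frag Ops E C (ERel R xs) = True"
| "in_frag Ops E C (ENRel R xs) = True"
| "in_frag Ops E C (EAnd p q) = (in_frag Ops E C p \<and> in_frag Ops E C q)"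
| "in_frag Ops E C (EOr p q) = (in_frag Ops E C p \<and> in_frag Ops E C q)"
| "in_frag Ops E C (EEx x p) = in_frag Ops E C p"
| "in_frag Ops E C (EAll x p) = in_frag Ops E C p"
| "in_frag Ops E C (EExF g p) = in_frag Ops E C p"

primrec eso_fv :: "eso \<Rightarrow> nat set" where
  "eso_fv (EEq x y) = {x, y}"
| "eso_fv (ENeq x y) = {x, y}"
| "eso_fv (ECmp e i j) = nt_fv i \<union> nt_fv j"
| "eso_fv (ENCmp e i j) = nt_fv i \<union> nt_fv j"
| "eso_fv (ERel R xs) = set xs"
| "eso_fv (ENRel R xs) = set xs"
| "eso_fv (EAnd p q) = eso_fv p \<union> eso_fv q"
| "eso_fv (EOr p q) = eso_fv p \<union> eso_fv q"
| "eso_fv (EEx x p) = eso_fv p - {x}"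
| "eso_fv (EAll x p) = eso_fv p - {x}"
| "eso_fv (EExF g p) = eso_fv p"

primrec eso_ffv :: "eso \<Rightarrow> sym set" where
  "eso_ffv (EEq x y) = {}"
| "eso_ffv (ENeq x y) = {}"
| "eso_ffv (ECmp e i j) = nt_ffv i \<union> nt_ffv j"
| "eso_ffv (ENCmp e i j) = nt_ffv i \<union> nt_ffv j"
| "eso_ffv (ERel R xs) = {}"
| "eso_ffv (ENRel R xs) = {}"
| "eso_ffv (EAnd p q) = eso_ffv p \<union> eso_ffv q"
| "eso_ffv (EOr p q) = eso_ffv p \<union> eso_ffv q"
| "eso_ffv (EEx x p) = eso_ffv p"
| "eso_ffv (EAll x p) = eso_ffv p"
| "eso_ffv (EExF g p) = eso_ffv p - {g}"

primrec eso_wf :: "sym set \<Rightarrow> eso \<Rightarrow> bool" where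
  "eso_wf tau (EEq x y) = True"
| "eso_wf tau (ENeq x y) = True"
| "eso_wf tau (ECmp e i j) = (nt_wf i \<and> nt_wf j)"
| "eso_wf tau (ENCmp e i j) = (nt_wf i \<and> nt_wf j)"
| "eso_wf tau (ERel R xs) = (R \<in> tau \<and> length xs = snd R)"
| "eso_wf tau (ENRel R xs) = (R \<in> tau \<and> length xs = snd R)"
| "eso_wf tau (EAnd p q) = (eso_wf tau p \<and> eso_wf tau q)"
| "eso_wf tau (EOr p q) = (eso_wf tau p \<and> eso_wf tau q)"
| "eso_wf tau (EEx x p) = eso_wf tau p"
| "eso_wf tau (EAll x p) = eso_wf tau p"
| "eso_wf tau (EExF g p) = eso_wf tau p"

definition upds :: "(nat \<Rightarrow> nat) \<Rightarrow> nat list \<Rightarrow> nat list \<Rightarrow> (nat \<Rightarrow> nat)" where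
  "upds s ys l = foldl (\<lambda>t (y, a). t(y := a)) s (zip ys l)"

primrec nt_eval :: "nat set \<Rightarrow> (sym \<Rightarrow> nat list \<Rightarrow> real) \<Rightarrow> (nat \<Rightarrow> nat) \<Rightarrow> nterm \<Rightarrow> real" where
  "nt_eval A F s (NConst c) = c"
| "nt_eval A F s (NApp g xs) = F g (map s xs)"
| "nt_eval A F s (NAdd i j) = nt_eval A F s i + nt_eval A F s j"
| "nt_eval A F s (NMul i j) = nt_eval A F s i * nt_eval A F s j"
| "nt_eval A F s (NSum ys i) = (\<Sum>l\<in>tuples (length ys) A. nt_eval A F (upds s ys l) i)"

fun cmp_eval :: "cmpop \<Rightarrow> real \<Rightarrow> real \<Rightarrow> bool" where
  "cmp_eval CEq a b = (a = b)"
| "cmp_eval CLt a b = (a < b)"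
| "cmp_eval CLe a b = (a \<le> b)"

primrec eso_sat :: "rstruc \<Rightarrow> (sym \<Rightarrow> nat list \<Rightarrow> real) \<Rightarrow> (nat \<Rightarrow> nat) \<Rightarrow> eso \<Rightarrow> bool" where
  "eso_sat M F s (EEq x y) = (s x = s y)"
| "eso_sat M F s (ENeq x y) = (s x \<noteq> s y)"
| "eso_sat M F s (ECmp e i j) = cmp_eval e (nt_eval (univ M) F s i) (nt_eval (univ M) F s j)"
| "eso_sat M F s (ENCmp e i j) = (\<not> cmp_eval e (nt_eval (univ M) F s i) (nt_eval (univ M) F s j))"
| "eso_sat M F s (ERel R xs) = (map s xs \<in> rel M R)"
| "eso_sat M F s (ENRel R xs) = (map s xs \<notin> rel M R)"
| "eso_sat M F s (EAnd p q) = (eso_sat M F s p \<and> eso_sat M F s q)"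
| "eso_sat M F s (EOr p q) = (eso_sat M F s p \<or> eso_sat M F s q)"
| "eso_sat M F s (EEx x p) = (\<exists>a\<in>univ M. eso_sat M F (s(x := a)) p)"
| "eso_sat M F s (EAll x p) = (\<forall>a\<in>univ M. eso_sat M F (s(x := a)) p)"
| "eso_sat M F s (EExF g p) =
     (\<exists>h. (\<forall>l. l \<notin> tuples (snd g) (univ M) \<longrightarrow> h l = 0) \<and> eso_sat M (F(g := h)) s p)"

definition Struc_ESO :: "sym set \<Rightarrow> sym \<Rightarrow> eso \<Rightarrow> rstruc set" where
  "Struc_ESO tau f psi = {M. is_dstruc tau (snd f) M \<and>
      eso_sat M (\<lambda>g. if g = f then fval M else (\<lambda>_. 0)) (\<lambda>_. 0) psi}"

end

theory Submission
  imports Defs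
begin

text \<open>Take the formula \<open>x \<bottom>\<bottom> y\<close> and the d[0,1]-structure on \<open>{0, 1}\<close> whose distribution is
the product of two copies of the coin \<open>(p, 1 - p)\<close> with \<open>p = \<surd>2 / 2\<close>. Choose a
\<open>\<rat>\<close>-linear map \<open>\<pi> : \<real> \<rightarrow> \<real>\<close> with \<open>\<pi> 1 = 0\<close> and \<open>\<pi> p = 1\<close> and perturb every real number
\<open>x\<close> to \<open>x + d \<pi> x\<close>. This map is additive and fixes \<open>0\<close> and \<open>1\<close>, so it commutes with the
numerical terms of \<open>ESO\<^sub>\<real>[\<le>, +, 0, 1]\<close>; since a sentence tests only finitely many strict or
non-strict comparisons, it remains true for all sufficiently small \<open>d\<close>, also when applied to the
witnesses of its function quantifiers. The perturbed distribution is still a distribution, but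
it is no longer a product: its marginals give \<open>(p + d)\<^sup>2\<close>, while the joint probability of
\<open>(0, 0)\<close> stays \<open>p\<^sup>2 = 1/2\<close>.\<close>

lemma sqrt_2_irrational: "sqrt 2 \<notin> \<rat>"
proof
  assume "sqrt 2 \<in> \<rat>"
  then obtain m n :: nat where n: "n \<noteq> 0" and mn: "\<bar>sqrt 2\<bar> = m / n" and "coprime m n"
    by (rule Rats_abs_nat_div_natE)
  from n mn have "real m = sqrt 2 * n" by simp
  then have "real (m\<^sup>2) = 2 * real (n\<^sup>2)" by (simp add: power_mult_distrib)
  then have m2: "m\<^sup>2 = 2 * n\<^sup>2" by linarith
  then have "even (m\<^sup>2)" by simp
  then have "even m" by simp
  then obtain k where "m = 2 * k" by blast
  with m2 have "n\<^sup>2 = 2 * k\<^sup>2" by (simp add: power_mult_distrib)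
  then have "even (n\<^sup>2)" by simp
  then have "even n" by simp
  with \<open>even m\<close> show False
    using coprime_common_divisor_nat[OF \<open>coprime m n\<close>, of 2] by simp
qed

definition rat_scale :: "rat \<Rightarrow> real \<Rightarrow> real" where
  "rat_scale q x = of_rat q * x"

interpretation rat_linear: vector_space_pair rat_scale rat_scale
  by unfold_locales (auto simp: rat_scale_def algebra_simps of_rat_add of_rat_mult)

lemma exists_additive_vanishing_at_one:
  fixes x :: real
  assumes "x \<notin> \<rat>"
  shows "\<exists>\<pi> :: real \<Rightarrow> real. additive \<pi> \<and> \<pi> 1 = 0 \<and> \<pi> x = 1"
proof -
  have "x \<notin> rat_linear.vs1.span {1}"
    using assms by (auto simp: rat_linear.vs1.span_singleton rat_scale_def)
  moreover have "rat_linear.vs1.independent {1::real}"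
    by (intro rat_linear.vs1.independent_insertI rat_linear.vs1.independent_empty)
      (simp add: rat_linear.vs1.span_empty)
  ultimately have indep: "rat_linear.vs1.independent {x, 1}"
    by (rule rat_linear.vs1.independent_insertI)
  have "x \<noteq> 1" using assms by auto
  define \<pi> where "\<pi> = rat_linear.construct {x, 1} (\<lambda>b. if b = 1 then 0 else 1)"
  interpret \<pi>: Vector_Spaces.linear rat_scale rat_scale \<pi>
    unfolding \<pi>_def by (rule rat_linear.linear_construct[OF indep])
  have "additive \<pi>" by unfold_locales (rule \<pi>.add)
  moreover have "\<pi> 1 = 0" "\<pi> x = 1"
    using rat_linear.construct_basis[OF indep] \<open>x \<noteq> 1\<close> by (simp_all add: \<pi>_def)
  ultimately show ?thesis by blast
qed

lemma finite_tuples: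
  assumes "finite A"
  shows "finite (tuples k A)"
proof -
  have "tuples k A = {xs. set xs \<subseteq> A \<and> length xs = k}" by (auto simp: tuples_def)
  with assms show ?thesis by (simp add: finite_lists_length_eq)
qed

lemma tuples_2: "tuples 2 A = (\<lambda>(a, b). [a, b]) ` (A \<times> A)"
  by (auto simp: tuples_def numeral_2_eq_2 length_Suc_conv image_iff)

lemma sum_tuples_2: "(\<Sum>l\<in>tuples 2 A. G l) = (\<Sum>a\<in>A. \<Sum>b\<in>A. G [a, b])"
proof -
  have "inj_on (\<lambda>(a, b). [a, b]) (A \<times> A)" by (auto simp: inj_on_def)
  then show ?thesis
    by (simp add: tuples_2 sum.reindex sum.cartesian_product case_prod_beta')
qed

lemma asgs_pair:
  assumes "x \<noteq> y"
  shows "asgs A {x, y} = (\<lambda>(a, b). [x \<mapsto> a, y \<mapsto> b]) ` (A \<times> A)"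
proof (intro set_eqI iffI)
  fix s assume "s \<in> asgs A {x, y}"
  then have dom: "dom s = {x, y}" and ran: "ran s \<subseteq> A" by (auto simp: asgs_def)
  then obtain a b where ab: "s x = Some a" "s y = Some b" by blast
  with ran have "a \<in> A" "b \<in> A" by (meson ranI subsetD)+
  moreover have "s = [x \<mapsto> a, y \<mapsto> b]"
  proof
    fix n
    show "s n = [x \<mapsto> a, y \<mapsto> b] n"
      using dom ab assms by (cases "n \<in> {x, y}") auto
  qed
  ultimately show "s \<in> (\<lambda>(a, b). [x \<mapsto> a, y \<mapsto> b]) ` (A \<times> A)"
    by (intro image_eqI[of _ _ "(a, b)"]) auto
qed (use assms in \<open>auto simp: asgs_def ran_def split: if_splits\<close>)

lemma sum_asgs_pair:
  assumes "x \<noteq> y"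
  shows "(\<Sum>s\<in>asgs A {x, y}. G s) = (\<Sum>a\<in>A. \<Sum>b\<in>A. G [x \<mapsto> a, y \<mapsto> b])"
proof -
  have "inj_on (\<lambda>(a, b). [x \<mapsto> a, y \<mapsto> b]) (A \<times> A)"
    using assms by (auto simp: inj_on_def fun_eq_iff dest: spec[of _ x] spec[of _ y])
  then show ?thesis
    unfolding asgs_pair[OF assms] by (simp add: sum.reindex sum.cartesian_product case_prod_beta')
qed

lemma weight_pair:
  assumes "x \<noteq> y" "finite A"
  shows "weight A {x, y} X zs b =
    (\<Sum>a\<in>A. \<Sum>c\<in>A. if map [x \<mapsto> a, y \<mapsto> c] zs = map Some b then X [x \<mapsto> a, y \<mapsto> c] else 0)"
proof -
  have "finite (asgs A {x, y})" using assms unfolding asgs_pair[OF assms(1)] by simp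
  then show ?thesis
    unfolding weight_def by (simp add: sum.inter_filter sum_asgs_pair[OF assms(1)])
qed

lemma eso_sat_fval_update: "eso_sat (M\<lparr>fval := g\<rparr>) F s psi = eso_sat M F s psi"
  by (induction psi arbitrary: F s) simp_all

definition product_struc :: "nat set \<Rightarrow> (nat \<Rightarrow> real) \<Rightarrow> rstruc" where
  "product_struc A P = \<lparr>univ = A, rel = \<lambda>_. {},
     fval = \<lambda>l. if l \<in> tuples 2 A then P (l ! 0) * P (l ! 1) else 0\<rparr>"

lemma is_dstruc_product_struc:
  assumes "finite A" "card A \<ge> 2" "\<forall>a\<in>A. P a \<ge> 0" "sum P A = 1"
  shows "is_dstruc {} 2 (product_struc A P)"
proof -
  have "(\<Sum>l\<in>tuples 2 A. fval (product_struc A P) l) = sum P A * sum P A"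
    unfolding sum_tuples_2 sum_product by (simp add: product_struc_def tuples_def)
  moreover have "fval (product_struc A P) l \<ge> 0" for l
    using assms(3) by (auto simp: product_struc_def tuples_2)
  ultimately show ?thesis
    using assms by (auto simp: is_dstruc_def product_struc_def)
qed

lemma team_of_product_struc:
  "x \<noteq> y \<Longrightarrow> a \<in> A \<Longrightarrow> b \<in> A \<Longrightarrow>
    team_of (product_struc A P) [x, y] [x \<mapsto> a, y \<mapsto> b] = P a * P b"
  by (auto simp: team_of_def product_struc_def asgs_def ran_def tuples_def)

lemma weights_product_struc:
  fixes A P x y
  defines "X \<equiv> team_of (product_struc A P) [x, y]"
  assumes "x \<noteq> y" "finite A" "sum P A = 1"
  shows "weight A {x, y} X [x] [u] = (if u \<in> A then P u else 0)"
    and "weight A {x, y} X [y] [v] = (if v \<in> A then P v else 0)"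
    and "weight A {x, y} X [x, y] [u, v] = (if u \<in> A \<and> v \<in> A then P u * P v else 0)"
    and "(\<Sum>s\<in>asgs A {x, y}. X s) = 1"
proof -
  have X: "\<And>a b. a \<in> A \<Longrightarrow> b \<in> A \<Longrightarrow> X [x \<mapsto> a, y \<mapsto> b] = P a * P b"
    unfolding X_def using assms(2) by (rule team_of_product_struc)
  note weight = weight_pair[OF assms(2,3)]
  show "weight A {x, y} X [x] [u] = (if u \<in> A then P u else 0)"
    using assms(2-4) unfolding weight
    by (subst sum.swap) (simp add: X sum.delta' flip: sum_distrib_left sum_distrib_right)
  show "weight A {x, y} X [y] [v] = (if v \<in> A then P v else 0)"
    using assms(2-4) unfolding weight
    by (simp add: X sum.delta' flip: sum_distrib_right)
  show "weight A {x, y} X [x, y] [u, v] = (if u \<in> A \<and> v \<in> A then P u * P v else 0)"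
    using assms(2,3) unfolding weight
    by (subst sum.swap) (simp add: X sum.delta' flip: if_if_eq_conj)
  show "(\<Sum>s\<in>asgs A {x, y}. X s) = 1"
    using assms(4) by (simp add: sum_asgs_pair[OF assms(2)] X flip: sum_product)
qed

lemma product_struc_in_Struc_FO:
  assumes "x \<noteq> y" "finite A" "card A \<ge> 2" "\<forall>a\<in>A. P a \<ge> 0" "sum P A = 1"
  shows "product_struc A P \<in> Struc_FO {} [x, y] (FInd [x] [y])"
proof -
  have "univ (product_struc A P) = A" by (simp add: product_struc_def)
  then have "fo_sat (product_struc A P) (FInd [x] [y]) {x, y} (team_of (product_struc A P) [x, y])"
    using assms(1,2,5) by (auto simp: weights_product_struc length_Suc_conv)
  with is_dstruc_product_struc[OF assms(2-)] show ?thesis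
    by (simp add: Struc_FO_def numeral_2_eq_2)
qed

locale additive_perturbation = additive \<pi> for \<pi> :: "real \<Rightarrow> real" +
  assumes one: "\<pi> 1 = 0"
begin

definition perturb :: "real \<Rightarrow> real \<Rightarrow> real" where
  "perturb d x = x + d * \<pi> x"

definition perturb_struc :: "real \<Rightarrow> rstruc \<Rightarrow> rstruc" where
  "perturb_struc d M = M\<lparr>fval := perturb d \<circ> fval M\<rparr>"

lemma perturb_0 [simp]: "perturb d 0 = 0"
  by (simp add: perturb_def zero)

lemma perturb_1 [simp]: "perturb d 1 = 1"
  by (simp add: perturb_def one)

lemma perturb_const: "\<pi> c = 0 \<Longrightarrow> perturb d c = c"
  by (simp add: perturb_def)

lemma perturb_add: "perturb d (x + y) = perturb d x + perturb d y"
  by (simp add: perturb_def add algebra_simps)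

lemma perturb_sum: "perturb d (sum g S) = (\<Sum>x\<in>S. perturb d (g x))"
  by (simp add: perturb_def sum sum.distrib sum_distrib_left)

lemma nt_eval_perturb:
  assumes "nt_ops i \<subseteq> {OPlus, OSum}" "\<forall>c\<in>nt_consts i. \<pi> c = 0"
  shows "nt_eval A (\<lambda>g l. perturb d (F g l)) s i = perturb d (nt_eval A F s i)"
  using assms by (induction i arbitrary: s) (auto simp: perturb_const perturb_add perturb_sum)

lemma tendsto_perturb: "((\<lambda>d. perturb d x) \<longlongrightarrow> x) (at 0)"
proof -
  have "((\<lambda>d. x + d * \<pi> x) \<longlongrightarrow> x + 0 * \<pi> x) (at 0)"
    by (intro tendsto_intros)
  then show ?thesis by (simp add: perturb_def)
qed

lemma eventually_perturb_less: "x < y \<Longrightarrow> \<forall>\<^sub>F d in at 0. perturb d x < perturb d y"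
  using order_tendstoD(1)[OF tendsto_diff[OF tendsto_perturb tendsto_perturb], of 0 y x]
  by simp

lemma eventually_cmp_eval_perturb:
  "\<forall>\<^sub>F d in at 0. cmp_eval e (perturb d x) (perturb d y) = cmp_eval e x y"
proof (cases x y rule: linorder_cases)
  case less
  then have "\<forall>\<^sub>F d in at 0. perturb d x < perturb d y" by (rule eventually_perturb_less)
  then show ?thesis by (rule eventually_mono) (use less in \<open>cases e; auto\<close>)
next
  case greater
  then have "\<forall>\<^sub>F d in at 0. perturb d y < perturb d x" by (rule eventually_perturb_less)
  then show ?thesis by (rule eventually_mono) (use greater in \<open>cases e; auto\<close>)
qed (cases e; simp)

lemma eventually_cmp_eval_nt_eval_perturb:
  assumes "nt_ops i \<union> nt_ops j \<subseteq> {OPlus, OSum}" "\<forall>c\<in>nt_consts i \<union> nt_consts j. \<pi> c = 0"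
  shows "\<forall>\<^sub>F d in at 0.
    cmp_eval e (nt_eval A (\<lambda>g l. perturb d (F g l)) s i) (nt_eval A (\<lambda>g l. perturb d (F g l)) s j) =
    cmp_eval e (nt_eval A F s i) (nt_eval A F s j)"
  using assms by (simp add: nt_eval_perturb eventually_cmp_eval_perturb)

text \<open>The witnesses of function quantifiers are perturbed along with the interpretation;
this is why the whole interpretation \<open>F\<close> is perturbed and not only the free symbol.\<close>

lemma eventually_eso_sat_perturb:
  assumes "finite (univ M)" "Ops \<subseteq> {OPlus, OSum}" "\<forall>c\<in>C. \<pi> c = 0"
    and "in_frag Ops E C psi" "eso_sat M F s psi"
  shows "\<forall>\<^sub>F d in at 0. eso_sat M (\<lambda>g l. perturb d (F g l)) s psi"
  using assms(4,5)
proof (induction psi arbitrary: F s)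
  case (ECmp e i j)
  with assms(2,3) have "nt_ops i \<union> nt_ops j \<subseteq> {OPlus, OSum}" "\<forall>c\<in>nt_consts i \<union> nt_consts j. \<pi> c = 0"
    by auto
  then have "\<forall>\<^sub>F d in at 0.
      cmp_eval e (nt_eval (univ M) (\<lambda>g l. perturb d (F g l)) s i) (nt_eval (univ M) (\<lambda>g l. perturb d (F g l)) s j) =
      cmp_eval e (nt_eval (univ M) F s i) (nt_eval (univ M) F s j)"
    by (rule eventually_cmp_eval_nt_eval_perturb)
  with ECmp.prems show ?case by (auto elim: eventually_mono)
next
  case (ENCmp e i j)
  with assms(2,3) have "nt_ops i \<union> nt_ops j \<subseteq> {OPlus, OSum}" "\<forall>c\<in>nt_consts i \<union> nt_consts j. \<pi> c = 0"
    by auto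
  then have "\<forall>\<^sub>F d in at 0.
      cmp_eval e (nt_eval (univ M) (\<lambda>g l. perturb d (F g l)) s i) (nt_eval (univ M) (\<lambda>g l. perturb d (F g l)) s j) =
      cmp_eval e (nt_eval (univ M) F s i) (nt_eval (univ M) F s j)"
    by (rule eventually_cmp_eval_nt_eval_perturb)
  with ENCmp.prems show ?case by (auto elim: eventually_mono)
next
  case (EAnd p q)
  then show ?case by (auto intro: eventually_conj)
next
  case (EOr p q)
  from EOr.prems consider "eso_sat M F s p" | "eso_sat M F s q" by auto
  then show ?case
  proof cases
    case 1
    with EOr.IH(1) EOr.prems(1) have "\<forall>\<^sub>F d in at 0. eso_sat M (\<lambda>g l. perturb d (F g l)) s p"
      by simp
    then show ?thesis by (rule eventually_mono) simp
  next
    case 2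
    with EOr.IH(2) EOr.prems(1) have "\<forall>\<^sub>F d in at 0. eso_sat M (\<lambda>g l. perturb d (F g l)) s q"
      by simp
    then show ?thesis by (rule eventually_mono) simp
  qed
next
  case (EEx x p)
  then obtain a where a: "a \<in> univ M" "eso_sat M F (s(x := a)) p" by auto
  with EEx.IH EEx.prems(1)
  have "\<forall>\<^sub>F d in at 0. eso_sat M (\<lambda>g l. perturb d (F g l)) (s(x := a)) p" by simp
  then show ?case by (rule eventually_mono) (use a in auto)
next
  case (EAll x p)
  with assms(1) have "\<forall>\<^sub>F d in at 0. \<forall>a\<in>univ M. eso_sat M (\<lambda>g l. perturb d (F g l)) (s(x := a)) p"
    by (intro eventually_ball_finite) simp_all
  then show ?case by simp
next
  case (EExF g p)
  then obtain h where h0: "\<forall>l. l \<notin> tuples (snd g) (univ M) \<longrightarrow> h l = 0"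
    and h: "eso_sat M (F(g := h)) s p" by auto
  have perturb_upd: "(\<lambda>g' l. perturb d ((F(g := h)) g' l)) = (\<lambda>g l. perturb d (F g l))(g := perturb d \<circ> h)"
    for d by (simp add: fun_eq_iff)
  from EExF.prems(1) have "in_frag Ops E C p" by simp
  from EExF.IH[OF this h] have
    "\<forall>\<^sub>F d in at 0. eso_sat M ((\<lambda>g l. perturb d (F g l))(g := perturb d \<circ> h)) s p"
    by (simp only: perturb_upd)
  then show ?case
    by (rule eventually_mono) (use h0 in \<open>auto intro!: exI[of _ "perturb _ \<circ> h"]\<close>)
qed simp_all

lemma eventually_is_dstruc_perturb_struc:
  assumes "is_dstruc tau n M"
  shows "\<forall>\<^sub>F d in at 0. is_dstruc tau n (perturb_struc d M)"
proof -
  let ?T = "tuples n (univ M)"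
  have "\<forall>l\<in>?T. \<forall>\<^sub>F d in at 0. perturb d (fval M l) \<ge> 0"
  proof
    fix l
    show "\<forall>\<^sub>F d in at 0. perturb d (fval M l) \<ge> 0"
    proof (cases "fval M l = 0")
      case False
      with assms have "fval M l > 0" by (simp add: is_dstruc_def less_le)
      then have "\<forall>\<^sub>F d in at 0. 0 < perturb d (fval M l)"
        by (rule order_tendstoD(1)[OF tendsto_perturb])
      then show ?thesis by (rule eventually_mono) simp
    qed simp
  qed
  then have "\<forall>\<^sub>F d in at 0. \<forall>l\<in>?T. perturb d (fval M l) \<ge> 0"
    using assms by (intro eventually_ball_finite finite_tuples) (simp_all add: is_dstruc_def)
  then show ?thesis
    by (rule eventually_mono)
      (use assms in \<open>auto simp: is_dstruc_def perturb_struc_def simp flip: perturb_sum\<close>)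
qed

lemma eventually_perturb_struc_in_Struc_ESO:
  assumes "M \<in> Struc_ESO tau f psi" "in_frag Ops E C psi"
    and "Ops \<subseteq> {OPlus, OSum}" "\<forall>c\<in>C. \<pi> c = 0"
  shows "\<forall>\<^sub>F d in at 0. perturb_struc d M \<in> Struc_ESO tau f psi"
proof -
  let ?F = "\<lambda>M g. if g = f then fval M else (\<lambda>_. 0)"
  have dstruc: "is_dstruc tau (snd f) M" and sat: "eso_sat M (?F M) (\<lambda>_. 0) psi"
    using assms(1) by (simp_all add: Struc_ESO_def)
  then have "finite (univ M)" by (simp add: is_dstruc_def)
  moreover have perturb_F: "(\<lambda>g l. perturb d (?F M g l)) = ?F (perturb_struc d M)" for d
    by (simp add: fun_eq_iff perturb_struc_def)
  ultimately have "\<forall>\<^sub>F d in at 0. eso_sat M (?F (perturb_struc d M)) (\<lambda>_. 0) psi"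
    using eventually_eso_sat_perturb[OF _ assms(3,4,2) sat] by (simp only: perturb_F)
  moreover have "eso_sat (perturb_struc d M) G t phi = eso_sat M G t phi" for d G t phi
    by (simp add: perturb_struc_def eso_sat_fval_update)
  ultimately show ?thesis
    using eventually_is_dstruc_perturb_struc[OF dstruc]
    by (auto simp: Struc_ESO_def intro: eventually_conj)
qed

lemma perturb_struc_product_struc_in_Struc_FO_imp:
  assumes "x \<noteq> y" "finite A" "sum P A = 1" "a \<in> A"
    and "perturb_struc d (product_struc A P) \<in> Struc_FO {} [x, y] (FInd [x] [y])"
  shows "perturb d (P a) * perturb d (P a) = perturb d (P a * P a)"
proof -
  let ?X = "team_of (product_struc A P) [x, y]"
  have "team_of (perturb_struc d (product_struc A P)) [x, y] = perturb d \<circ> ?X"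
    by (auto simp: fun_eq_iff team_of_def perturb_struc_def)
  moreover have "univ (perturb_struc d (product_struc A P)) = A"
    by (simp add: perturb_struc_def product_struc_def)
  ultimately have "\<forall>b c. length b = 1 \<longrightarrow> length c = 1 \<longrightarrow>
      weight A {x, y} (perturb d \<circ> ?X) [x] b * weight A {x, y} (perturb d \<circ> ?X) [y] c =
      weight A {x, y} (perturb d \<circ> ?X) [x, y] (b @ c) * (\<Sum>s\<in>asgs A {x, y}. (perturb d \<circ> ?X) s)"
    using assms(5) by (simp add: Struc_FO_def)
  moreover have "weight A V (perturb d \<circ> Y) zs b = perturb d (weight A V Y zs b)" for V Y zs b
    by (simp add: weight_def perturb_sum)
  ultimately have "perturb d (weight A {x, y} ?X [x] [a]) * perturb d (weight A {x, y} ?X [y] [a]) =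
      perturb d (weight A {x, y} ?X [x, y] [a, a]) * perturb d (\<Sum>s\<in>asgs A {x, y}. ?X s)"
    by (simp add: perturb_sum)
  with assms(1-4) show ?thesis by (simp add: weights_product_struc)
qed

lemma eventually_perturb_struc_product_struc_notin_Struc_FO:
  assumes "x \<noteq> y" "finite A" "sum P A = 1" "a \<in> A" "\<pi> (P a * P a) = 0" "\<pi> (P a) \<noteq> 0"
  shows "\<forall>\<^sub>F d in at 0. perturb_struc d (product_struc A P) \<notin> Struc_FO {} [x, y] (FInd [x] [y])"
proof -
  have "\<forall>\<^sub>F d in at 0. d \<noteq> 0 \<and> d \<noteq> - 2 * P a / \<pi> (P a)"
    by (intro eventually_conj eventually_neq_at_within)
  then show ?thesis
  proof (rule eventually_mono)
    fix d assume d: "d \<noteq> 0 \<and> d \<noteq> - 2 * P a / \<pi> (P a)"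
    show "perturb_struc d (product_struc A P) \<notin> Struc_FO {} [x, y] (FInd [x] [y])"
    proof
      assume "perturb_struc d (product_struc A P) \<in> Struc_FO {} [x, y] (FInd [x] [y])"
      then have "perturb d (P a) * perturb d (P a) = perturb d (P a * P a)"
        by (rule perturb_struc_product_struc_in_Struc_FO_imp[OF assms(1-4)])
      with assms(5) have "d * \<pi> (P a) * (2 * P a + d * \<pi> (P a)) = 0"
        by (simp add: perturb_def algebra_simps)
      with assms(6) d have "d * \<pi> (P a) = - 2 * P a" by auto
      with assms(6) d show False by (auto simp: field_simps)
    qed
  qed
qed

lemma Struc_ESO_neq_if_unstable:
  assumes "M \<in> S" "\<forall>\<^sub>F d in at 0. perturb_struc d M \<notin> S"
    and "in_frag Ops E C psi" "Ops \<subseteq> {OPlus, OSum}" "\<forall>c\<in>C. \<pi> c = 0"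
  shows "S \<noteq> Struc_ESO tau f psi"
proof
  assume S: "S = Struc_ESO tau f psi"
  have "\<forall>\<^sub>F d in at 0. perturb_struc d M \<in> S"
    using assms(1,3-5) unfolding S by (rule eventually_perturb_struc_in_Struc_ESO)
  from eventually_conj[OF this assms(2)] show False by simp
qed

end

theorem mainTheorem18:
  shows "\<exists>tau phi xs. finite tau \<and> fo_wf tau phi \<and> distinct xs \<and> set xs = fo_fv phi \<and>
     (\<forall>psi f. eso_wf tau psi \<and> in_frag {OPlus} {CLe} {0, 1} psi \<and>
        snd f = length xs \<and> eso_ffv psi \<subseteq> {f} \<and> eso_fv psi = {} \<longrightarrow>
        Struc_FO tau xs phi \<noteq> Struc_ESO tau f psi)"
proof (intro exI[of _ "{}"] exI[of _ "FInd [0] [1]"] exI[of _ "[0, 1]"] conjI allI impI)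
  fix psi f
  assume "eso_wf {} psi \<and> in_frag {OPlus} {CLe} {0, 1} psi \<and> snd f = length [0::nat, 1] \<and>
    eso_ffv psi \<subseteq> {f} \<and> eso_fv psi = {}"
  then have psi: "in_frag {OPlus} {CLe} {0, 1} psi" by simp
  define p where "p = sqrt 2 / 2"
  define P where "P a = (if a = 0 then p else 1 - p)" for a :: nat
  have p: "p * p = 1 / 2" "0 < p" "p < 1"
    using real_sqrt_less_iff[of 2 4] by (auto simp: p_def real_sqrt_four)
  have "p \<notin> \<rat>"
    using sqrt_2_irrational Rats_mult[of 2 p] by (auto simp: p_def)
  then obtain \<pi> :: "real \<Rightarrow> real" where "additive \<pi>" "\<pi> 1 = 0" "\<pi> p = 1"
    using exists_additive_vanishing_at_one by blast
  then interpret additive_perturbation \<pi>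
    by (intro additive_perturbation.intro additive_perturbation_axioms.intro)
  have "\<pi> (1 / 2) = 0" using add[of "1 / 2" "1 / 2"] one by simp
  show "Struc_FO {} [0, 1] (FInd [0] [1]) \<noteq> Struc_ESO {} f psi"
  proof (rule Struc_ESO_neq_if_unstable[OF _ _ psi])
    show "product_struc {0, 1} P \<in> Struc_FO {} [0, 1] (FInd [0] [1])"
      using p by (intro product_struc_in_Struc_FO) (auto simp: P_def)
    show "\<forall>\<^sub>F d in at 0. perturb_struc d (product_struc {0, 1} P) \<notin> Struc_FO {} [0, 1] (FInd [0] [1])"
      using p \<open>\<pi> p = 1\<close> \<open>\<pi> (1 / 2) = 0\<close>
      by (intro eventually_perturb_struc_product_struc_notin_Struc_FO) (auto simp: P_def p(1))
  qed (use zero one in auto)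
qed auto

end
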